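(* Let $\rho_{ABC}$ be a three-qubit state that is symmetric, i.e. invariant under every permutation of the three qubits. Then none of its three two-qubit reduced states violates the three-settings CJWR linear steering inequality, i.e. $S_{AB}\le 1$, $S_{AC}\le 1$ and $S_{BC}\le 1$.
   Context: For a two-qubit state $\rho$ let $t_{kl}=\mathrm{Tr}[\rho\,\sigma_k\otimes\sigma_l]$ ($k,l\in\{1,2,3\}$, $\sigma_k$ Pauli matrices) and $S(\rho)=\sum_{k,l}t_{kl}^2$. For a three-qubit state, $\rho_{AB},\rho_{AC},\rho_{BC}$ are its two-qubit reduced states and $S_{ij}=S(\rho_{ij})$. The three-settings CJWR linear steering inequality $\frac{1}{\sqrt3}|\sum_{k=1}^3\langle A_k\otimes B_k\rangle|\le1$ (with $A_k=\hat a_k\cdot\vec\sigma$, $\hat a_k$ unit vectors, $B_k=\hat b_k\cdot\vec\sigma$, $\hat b_k$ orthonormal) has maximal left-hand side $\sqrt{S(\rho)}$ over all settings, so it is violated by $\rho$ iff $S(\rho)>1$. *)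

theory Defs
  imports Complex_Main "HOL-Combinatorics.Permutations"
begin

text \<open>Computational basis of one qubit: False = |0>, True = |1>.
  Two-qubit operators are functions on (bool * bool), three-qubit operators
  functions on (bool * bool * bool) (qubits A, B, C in this order).\<close>

type_synonym qb2 = "bool \<times> bool"
type_synonym qb3 = "bool \<times> bool \<times> bool"

definition is_state3 :: "(qb3 \<Rightarrow> qb3 \<Rightarrow> complex) \<Rightarrow> bool" where
  "is_state3 \<rho> \<longleftrightarrow>
     (\<forall>x y. \<rho> y x = cnj (\<rho> x y)) \<and>
     (\<forall>v :: qb3 \<Rightarrow> complex. 0 \<le> Re (\<Sum>x\<in>UNIV. \<Sum>y\<in>UNIV. cnj (v x) * \<rho> x y * v y)) \<and>
     (\<Sum>x\<in>UNIV. \<rho> x x) = 1"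

text \<open>Pauli matrices sigma_1, sigma_2, sigma_3 (entry (r,c)).\<close>
definition pauli :: "nat \<Rightarrow> bool \<Rightarrow> bool \<Rightarrow> complex" where
  "pauli k r c =
     (if k = 1 then (if r \<noteq> c then 1 else 0)
      else if k = 2 then (if r = c then 0 else if r then \<i> else - \<i>)
      else (if r \<noteq> c then 0 else if r then -1 else 1))"

text \<open>t_kl = Tr[rho (sigma_k tensor sigma_l)]; real for Hermitian rho.\<close>
definition tcorr :: "(qb2 \<Rightarrow> qb2 \<Rightarrow> complex) \<Rightarrow> nat \<Rightarrow> nat \<Rightarrow> real" where
  "tcorr \<rho> k l = Re (\<Sum>x\<in>UNIV. \<Sum>y\<in>UNIV.
      \<rho> x y * (pauli k (fst y) (fst x) * pauli l (snd y) (snd x)))"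

definition Sval :: "(qb2 \<Rightarrow> qb2 \<Rightarrow> complex) \<Rightarrow> real" where
  "Sval \<rho> = (\<Sum>k\<in>{1,2,3}. \<Sum>l\<in>{1,2,3}. (tcorr \<rho> k l)\<^sup>2)"

definition red_AB :: "(qb3 \<Rightarrow> qb3 \<Rightarrow> complex) \<Rightarrow> qb2 \<Rightarrow> qb2 \<Rightarrow> complex" where
  "red_AB \<rho> x y = (\<Sum>c\<in>UNIV. \<rho> (fst x, snd x, c) (fst y, snd y, c))"
definition red_AC :: "(qb3 \<Rightarrow> qb3 \<Rightarrow> complex) \<Rightarrow> qb2 \<Rightarrow> qb2 \<Rightarrow> complex" where
  "red_AC \<rho> x y = (\<Sum>b\<in>UNIV. \<rho> (fst x, b, snd x) (fst y, b, snd y))"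
definition red_BC :: "(qb3 \<Rightarrow> qb3 \<Rightarrow> complex) \<Rightarrow> qb2 \<Rightarrow> qb2 \<Rightarrow> complex" where
  "red_BC \<rho> x y = (\<Sum>a\<in>UNIV. \<rho> (a, fst x, snd x) (a, fst y, snd y))"

definition qget :: "qb3 \<Rightarrow> nat \<Rightarrow> bool" where
  "qget x i = (if i = 0 then fst x else if i = 1 then fst (snd x) else snd (snd x))"
definition qperm :: "(nat \<Rightarrow> nat) \<Rightarrow> qb3 \<Rightarrow> qb3" where
  "qperm \<pi> x = (qget x (\<pi> 0), qget x (\<pi> 1), qget x (\<pi> 2))"

definition symmetric3 :: "(qb3 \<Rightarrow> qb3 \<Rightarrow> complex) \<Rightarrow> bool" where
  "symmetric3 \<rho> \<longleftrightarrow>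
     (\<forall>\<pi>. \<pi> permutes {0,1,2} \<longrightarrow> (\<forall>x y. \<rho> (qperm \<pi> x) (qperm \<pi> y) = \<rho> x y))"

end

theory Submission
  imports Defs
begin

text \<open>For a real symmetric 3x3 matrix \<open>T\<close> let \<open>Y\<^sub>T\<close> be the average over the three qubit pairs
  of \<open>\<Sum>\<^sub>k\<^sub>l T\<^sub>k\<^sub>l \<sigma>\<^sub>k \<otimes> \<sigma>\<^sub>l\<close>. An explicit sum of weighted rank-one projectors shows
  \<open>(1 + |T|\<^sup>2)/2 - Y\<^sub>T \<ge> 0\<close>, so every three-qubit state satisfies
  \<open>\<Sum>\<^sub>k\<^sub>l T\<^sub>k\<^sub>l (t\<^sup>A\<^sup>B + t\<^sup>A\<^sup>C + t\<^sup>B\<^sup>C)\<^sub>k\<^sub>l / 3 \<le> (1 + |T|\<^sup>2)/2\<close>.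
  For a symmetric state the three reduced states coincide and their correlation matrix \<open>t\<close> is
  symmetric; taking \<open>T = t\<close> gives \<open>S \<le> (1 + S)/2\<close>, i.e. \<open>S \<le> 1\<close>.\<close>

lemma sum_UNIV_bool: "(\<Sum>x\<in>UNIV. f x) = f True + f False"
  for f :: "bool \<Rightarrow> 'a::comm_monoid_add"
  by (simp add: UNIV_bool add.commute)

lemma sum_UNIV_prod: "(\<Sum>x\<in>UNIV. f x) = (\<Sum>a\<in>UNIV. \<Sum>b\<in>UNIV. f (a, b))"
  for f :: "'a::finite \<times> 'b::finite \<Rightarrow> 'c::comm_monoid_add"
  unfolding UNIV_Times_UNIV[symmetric] sum.cartesian_product by simp

definition trace_prod :: "('a::finite \<Rightarrow> 'a \<Rightarrow> complex) \<Rightarrow> ('a \<Rightarrow> 'a \<Rightarrow> complex) \<Rightarrow> complex" where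
  "trace_prod A B = (\<Sum>x\<in>UNIV. \<Sum>y\<in>UNIV. A x y * B y x)"

lemma trace_prod_diff: "trace_prod A (\<lambda>x y. B x y - C x y) = trace_prod A B - trace_prod A C"
  by (simp add: trace_prod_def right_diff_distrib sum_subtractf)

lemma trace_prod_scale: "trace_prod A (\<lambda>x y. c * B x y) = c * trace_prod A B"
  by (simp add: trace_prod_def sum_distrib_left algebra_simps)

lemma trace_prod_add: "trace_prod A (\<lambda>x y. B x y + C x y) = trace_prod A B + trace_prod A C"
  by (simp add: trace_prod_def distrib_left sum.distrib)

lemma trace_prod_sum: "trace_prod A (\<lambda>x y. \<Sum>i\<in>I. F i x y) = (\<Sum>i\<in>I. trace_prod A (F i))"
  by (simp add: trace_prod_def sum_distrib_left sum.swap[of _ I])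

lemma trace_prod_id: "trace_prod A (\<lambda>x y. if x = y then 1 else 0) = (\<Sum>x\<in>UNIV. A x x)"
  by (simp add: trace_prod_def if_distrib[of "(*) _"] cong: if_cong)

definition proj_sum :: "(real \<times> ('a \<Rightarrow> complex)) list \<Rightarrow> 'a \<Rightarrow> 'a \<Rightarrow> complex" where
  "proj_sum ws x y = (\<Sum>(w, v)\<leftarrow>ws. of_real w * (v x * cnj (v y)))"

lemma state_trace_prod_proj_nonneg:
  assumes "is_state3 \<rho>"
  shows "0 \<le> Re (trace_prod \<rho> (\<lambda>x y. v x * cnj (v y)))"
proof -
  have "trace_prod \<rho> (\<lambda>x y. v x * cnj (v y)) = (\<Sum>x\<in>UNIV. \<Sum>y\<in>UNIV. cnj (v x) * \<rho> x y * v y)"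
    by (simp add: trace_prod_def algebra_simps)
  moreover have "0 \<le> Re (\<Sum>x\<in>UNIV. \<Sum>y\<in>UNIV. cnj (v x) * \<rho> x y * v y)"
    using assms unfolding is_state3_def by blast
  ultimately show ?thesis
    by simp
qed

lemma state_trace_prod_proj_sum_nonneg:
  assumes "is_state3 \<rho>" and "\<And>w v. (w, v) \<in> set ws \<Longrightarrow> 0 \<le> w"
  shows "0 \<le> Re (trace_prod \<rho> (proj_sum ws))"
  using assms(2)
proof (induction ws)
  case Nil
  then show ?case
    by (simp add: proj_sum_def trace_prod_def)
next
  case (Cons p ws)
  obtain w v where p: "p = (w, v)"
    by fastforce
  have "proj_sum (p # ws) = (\<lambda>x y. of_real w * (v x * cnj (v y)) + proj_sum ws x y)"
    by (simp add: proj_sum_def p fun_eq_iff)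
  then have "Re (trace_prod \<rho> (proj_sum (p # ws)))
      = w * Re (trace_prod \<rho> (\<lambda>x y. v x * cnj (v y))) + Re (trace_prod \<rho> (proj_sum ws))"
    by (simp add: trace_prod_add trace_prod_scale)
  moreover have "0 \<le> w" and "0 \<le> Re (trace_prod \<rho> (proj_sum ws))"
    using Cons.IH Cons.prems by (auto simp: p)
  ultimately show ?case
    using state_trace_prod_proj_nonneg[OF assms(1), of v] by simp
qed

definition pauli2 :: "nat \<Rightarrow> nat \<Rightarrow> qb2 \<Rightarrow> qb2 \<Rightarrow> complex" where
  "pauli2 k l x y = pauli k (fst x) (fst y) * pauli l (snd x) (snd y)"

lemma tcorr_eq_trace_prod: "tcorr \<rho> k l = Re (trace_prod \<rho> (pauli2 k l))"
  by (simp add: tcorr_def trace_prod_def pauli2_def)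

definition on_AB :: "(qb2 \<Rightarrow> qb2 \<Rightarrow> complex) \<Rightarrow> qb3 \<Rightarrow> qb3 \<Rightarrow> complex" where
  "on_AB M x y = M (fst x, fst (snd x)) (fst y, fst (snd y)) * (if snd (snd x) = snd (snd y) then 1 else 0)"

definition on_AC :: "(qb2 \<Rightarrow> qb2 \<Rightarrow> complex) \<Rightarrow> qb3 \<Rightarrow> qb3 \<Rightarrow> complex" where
  "on_AC M x y = M (fst x, snd (snd x)) (fst y, snd (snd y)) * (if fst (snd x) = fst (snd y) then 1 else 0)"

definition on_BC :: "(qb2 \<Rightarrow> qb2 \<Rightarrow> complex) \<Rightarrow> qb3 \<Rightarrow> qb3 \<Rightarrow> complex" where
  "on_BC M x y = M (snd x) (snd y) * (if fst x = fst y then 1 else 0)"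

lemma trace_prod_on_AB: "trace_prod \<rho> (on_AB M) = trace_prod (red_AB \<rho>) M"
  unfolding trace_prod_def on_AB_def red_AB_def
  by (simp only: sum_UNIV_prod sum_UNIV_bool) (simp add: algebra_simps)

lemma trace_prod_on_AC: "trace_prod \<rho> (on_AC M) = trace_prod (red_AC \<rho>) M"
  unfolding trace_prod_def on_AC_def red_AC_def
  by (simp only: sum_UNIV_prod sum_UNIV_bool) (simp add: algebra_simps)

lemma trace_prod_on_BC: "trace_prod \<rho> (on_BC M) = trace_prod (red_BC \<rho>) M"
  unfolding trace_prod_def on_BC_def red_BC_def
  by (simp only: sum_UNIV_prod sum_UNIV_bool) (simp add: algebra_simps)

definition steering_op :: "(nat \<Rightarrow> nat \<Rightarrow> real) \<Rightarrow> qb3 \<Rightarrow> qb3 \<Rightarrow> complex" where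
  "steering_op T x y = (\<Sum>k\<in>{1,2,3}. \<Sum>l\<in>{1,2,3}. of_real (T k l / 3) *
     (on_AB (pauli2 k l) x y + on_AC (pauli2 k l) x y + on_BC (pauli2 k l) x y))"

lemma trace_prod_steering_op:
  "Re (trace_prod \<rho> (steering_op T)) = (\<Sum>k\<in>{1,2,3}. \<Sum>l\<in>{1,2,3}.
     T k l * (tcorr (red_AB \<rho>) k l + tcorr (red_AC \<rho>) k l + tcorr (red_BC \<rho>) k l) / 3)"
proof -
  have "trace_prod \<rho> (steering_op T) = (\<Sum>k\<in>{1,2,3}. \<Sum>l\<in>{1,2,3}. of_real (T k l / 3) *
     (trace_prod (red_AB \<rho>) (pauli2 k l) + trace_prod (red_AC \<rho>) (pauli2 k l)
      + trace_prod (red_BC \<rho>) (pauli2 k l)))"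
    unfolding steering_op_def
    by (simp only: trace_prod_sum trace_prod_scale trace_prod_add
        trace_prod_on_AB trace_prod_on_AC trace_prod_on_BC)
  then show ?thesis
    by (simp only: Re_sum) (intro sum.cong refl, simp add: tcorr_eq_trace_prod)
qed

definition frob_sq :: "(nat \<Rightarrow> nat \<Rightarrow> real) \<Rightarrow> real" where
  "frob_sq T = (\<Sum>k\<in>{1,2,3}. \<Sum>l\<in>{1,2,3}. (T k l)\<^sup>2)"

definition ket8 :: "complex list \<Rightarrow> qb3 \<Rightarrow> complex" where
  "ket8 v x = v ! (4 * of_bool (fst x) + 2 * of_bool (fst (snd x)) + of_bool (snd (snd x)))"

text \<open>The first eight vectors lie in the symmetric subspace (the last four of them are the Dicke
  states), the remaining four span its orthogonal complement.\<close>

definition steering_cert :: "(nat \<Rightarrow> nat \<Rightarrow> real) \<Rightarrow> (real \<times> (qb3 \<Rightarrow> complex)) list" where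
  "steering_cert T = (let
     a = T 1 1; b = T 2 2; d = T 3 3; e = T 1 2; f = T 1 3; g = T 2 3;
     p = Complex (2*d - a - b - 2) 0; q = Complex (a - b) (2*e); r = Complex (2*f) (2*g);
     s = Complex (a + b - 2*d - 2) 0;
     \<tau> = (a + b + d) / 3;
     \<alpha> = 3/2 * (\<tau> - 1/3)\<^sup>2;
     \<beta> = 3/2 * (\<tau> + 1/3)\<^sup>2 + (frob_sq T - 3*\<tau>\<^sup>2)/2 + 1/3
   in map (\<lambda>(w, v). (w, ket8 v))
     [(1/12, [p, r, r, q, r, q, q, 0]),
      (1/12, [0, cnj q, cnj q, - cnj r, cnj q, - cnj r, - cnj r, p]),
      (1/36, [3 * cnj r, s, s, 0, s, 0, 0, 3 * q]),
      (1/36, [3 * cnj q, 0, 0, s, 0, s, s, -3 * r]),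
      (\<alpha>, [1, 0, 0, 0, 0, 0, 0, 0]), (\<alpha>, [0, 0, 0, 0, 0, 0, 0, 1]),
      (\<alpha>/3, [0, 1, 1, 0, 1, 0, 0, 0]), (\<alpha>/3, [0, 0, 0, 1, 0, 1, 1, 0]),
      (\<beta>/2, [0, 1, -1, 0, 0, 0, 0, 0]), (\<beta>/6, [0, 1, 1, 0, -2, 0, 0, 0]),
      (\<beta>/2, [0, 0, 0, 1, 0, -1, 0, 0]), (\<beta>/6, [0, 0, 0, 1, 0, 1, -2, 0])])"

lemma three_mean_sq_le: "3 * ((a + b + c) / 3)\<^sup>2 \<le> a\<^sup>2 + b\<^sup>2 + c\<^sup>2"
  for a b c :: real
proof -
  have "a\<^sup>2 + b\<^sup>2 + c\<^sup>2 - 3 * ((a + b + c) / 3)\<^sup>2 = ((a - b)\<^sup>2 + (b - c)\<^sup>2 + (a - c)\<^sup>2) / 3"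
    by (simp add: power2_eq_square field_simps)
  moreover have "0 \<le> ((a - b)\<^sup>2 + (b - c)\<^sup>2 + (a - c)\<^sup>2) / 3"
    by simp
  ultimately show ?thesis
    by linarith
qed

lemma diag_sq_le_frob_sq: "(T 1 1)\<^sup>2 + (T 2 2)\<^sup>2 + (T 3 3)\<^sup>2 \<le> frob_sq T"
  unfolding frob_sq_def by simp

lemma steering_cert_weights_nonneg:
  assumes "(w, v) \<in> set (steering_cert T)"
  shows "0 \<le> w"
proof -
  define \<tau> where "\<tau> = (T 1 1 + T 2 2 + T 3 3) / 3"
  define \<alpha> where "\<alpha> = 3/2 * (\<tau> - 1/3)\<^sup>2"
  define \<beta> where "\<beta> = 3/2 * (\<tau> + 1/3)\<^sup>2 + (frob_sq T - 3*\<tau>\<^sup>2)/2 + 1/3"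
  have "0 \<le> \<alpha>"
    by (simp add: \<alpha>_def)
  moreover have "0 \<le> \<beta>"
  proof -
    have "3 * \<tau>\<^sup>2 \<le> frob_sq T"
      using three_mean_sq_le[of "T 1 1" "T 2 2" "T 3 3"] diag_sq_le_frob_sq[of T]
      unfolding \<tau>_def by linarith
    then show ?thesis
      unfolding \<beta>_def by (intro add_nonneg_nonneg) auto
  qed
  moreover have "w \<in> set (map fst (steering_cert T))"
    using assms by force
  then have "w \<in> {1/12, 1/36, \<alpha>, \<alpha>/3, \<beta>/2, \<beta>/6}"
    unfolding steering_cert_def Let_def \<alpha>_def \<beta>_def \<tau>_def by auto
  ultimately show ?thesis
    by auto
qed

lemma proj_sum_steering_cert:
  assumes "\<And>k l. T k l = T l k"
  shows "proj_sum (steering_cert T)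
    = (\<lambda>x y. of_real ((1 + frob_sq T) / 2) * (if x = y then 1 else 0) - steering_op T x y)"
  unfolding fun_eq_iff split_paired_All
proof (intro allI)
  \<comment> \<open>stated with \<open>Suc 0\<close>, the simplifier's normal form of the numeral \<open>1 :: nat\<close>\<close>
  have sym: "T 2 (Suc 0) = T (Suc 0) 2" "T 3 (Suc 0) = T (Suc 0) 3" "T 3 2 = T 2 3"
    using assms by blast+
  fix x1 x2 x3 y1 y2 y3 :: bool
  show "proj_sum (steering_cert T) (x1, x2, x3) (y1, y2, y3)
    = of_real ((1 + frob_sq T) / 2) * (if (x1, x2, x3) = (y1, y2, y3) then 1 else 0)
      - steering_op T (x1, x2, x3) (y1, y2, y3)"
    by (cases x1; cases x2; cases x3; cases y1; cases y2; cases y3;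
        simp add: proj_sum_def steering_cert_def Let_def ket8_def frob_sq_def steering_op_def
          on_AB_def on_AC_def on_BC_def pauli2_def pauli_def sym complex_eq_iff;
        simp add: field_simps power2_eq_square)
qed

lemma reduced_correlations_bound:
  assumes "is_state3 \<rho>" and "\<And>k l. T k l = T l k"
  shows "(\<Sum>k\<in>{1,2,3}. \<Sum>l\<in>{1,2,3}.
      T k l * (tcorr (red_AB \<rho>) k l + tcorr (red_AC \<rho>) k l + tcorr (red_BC \<rho>) k l) / 3)
    \<le> (1 + frob_sq T) / 2"
proof -
  have "trace_prod \<rho> (proj_sum (steering_cert T))
      = of_real ((1 + frob_sq T) / 2) * (\<Sum>x\<in>UNIV. \<rho> x x) - trace_prod \<rho> (steering_op T)"
    by (simp only: proj_sum_steering_cert[OF assms(2)] trace_prod_diff trace_prod_scale trace_prod_id)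
  moreover have "(\<Sum>x\<in>UNIV. \<rho> x x) = 1"
    using assms(1) unfolding is_state3_def by simp
  ultimately have "Re (trace_prod \<rho> (proj_sum (steering_cert T)))
      = (1 + frob_sq T) / 2 - Re (trace_prod \<rho> (steering_op T))"
    by simp
  moreover have "0 \<le> Re (trace_prod \<rho> (proj_sum (steering_cert T)))"
    using state_trace_prod_proj_sum_nonneg[OF assms(1)] steering_cert_weights_nonneg by blast
  ultimately show ?thesis
    by (simp add: trace_prod_steering_op)
qed

lemma symmetric3_swap_AB:
  assumes "symmetric3 \<rho>"
  shows "\<rho> (b, a, c) (b', a', c') = \<rho> (a, b, c) (a', b', c')"
proof -
  have "transpose 0 1 permutes {0, 1, 2 :: nat}"
    by (rule permutes_swap_id) auto
  moreover have "qperm (transpose 0 1) (a, b, c) = (b, a, c)" for a b c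
    by (simp add: qperm_def qget_def transpose_def)
  ultimately show ?thesis
    using assms unfolding symmetric3_def by metis
qed

lemma symmetric3_swap_BC:
  assumes "symmetric3 \<rho>"
  shows "\<rho> (a, c, b) (a', c', b') = \<rho> (a, b, c) (a', b', c')"
proof -
  have "transpose 1 2 permutes {0, 1, 2 :: nat}"
    by (rule permutes_swap_id) auto
  moreover have "qperm (transpose 1 2) (a, b, c) = (a, c, b)" for a b c
    by (simp add: qperm_def qget_def transpose_def)
  ultimately show ?thesis
    using assms unfolding symmetric3_def by metis
qed

lemma red_AC_eq_red_AB: "symmetric3 \<rho> \<Longrightarrow> red_AC \<rho> = red_AB \<rho>"
  unfolding red_AC_def red_AB_def by (simp add: symmetric3_swap_BC)

lemma red_BC_eq_red_AB: "symmetric3 \<rho> \<Longrightarrow> red_BC \<rho> = red_AB \<rho>"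
  unfolding red_BC_def red_AB_def by (simp add: symmetric3_swap_AB symmetric3_swap_BC)

lemma tcorr_swap: "tcorr (\<lambda>x y. \<sigma> (prod.swap x) (prod.swap y)) k l = tcorr \<sigma> l k"
  unfolding tcorr_def
  by (simp only: sum_UNIV_prod sum_UNIV_bool) (simp add: algebra_simps)

lemma tcorr_red_AB_commute:
  assumes "symmetric3 \<rho>"
  shows "tcorr (red_AB \<rho>) k l = tcorr (red_AB \<rho>) l k"
proof -
  have "(\<lambda>x y. red_AB \<rho> (prod.swap x) (prod.swap y)) = red_AB \<rho>"
    unfolding red_AB_def by (simp add: symmetric3_swap_AB[OF assms])
  then show ?thesis
    using tcorr_swap[of "red_AB \<rho>" k l] by simp
qed

theorem corollary1:
  fixes \<rho> :: "qb3 \<Rightarrow> qb3 \<Rightarrow> complex"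
  assumes "is_state3 \<rho>" and "symmetric3 \<rho>"
  shows "Sval (red_AB \<rho>) \<le> 1 \<and> Sval (red_AC \<rho>) \<le> 1 \<and> Sval (red_BC \<rho>) \<le> 1"
proof -
  define t where "t = tcorr (red_AB \<rho>)"
  have "(\<Sum>k\<in>{1,2,3}. \<Sum>l\<in>{1,2,3}. t k l * (t k l + t k l + t k l) / 3) \<le> (1 + frob_sq t) / 2"
    using reduced_correlations_bound[OF assms(1), of t] tcorr_red_AB_commute[OF assms(2)]
    unfolding t_def red_AC_eq_red_AB[OF assms(2)] red_BC_eq_red_AB[OF assms(2)] by blast
  moreover have "(\<Sum>k\<in>{1,2,3}. \<Sum>l\<in>{1,2,3}. t k l * (t k l + t k l + t k l) / 3) = frob_sq t"
    unfolding frob_sq_def by (intro sum.cong refl) (simp add: power2_eq_square)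
  ultimately have "Sval (red_AB \<rho>) \<le> 1"
    by (simp add: Sval_def frob_sq_def t_def)
  then show ?thesis
    using red_AC_eq_red_AB[OF assms(2)] red_BC_eq_red_AB[OF assms(2)] by simp
qed

end
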